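(* Let $H\in(0,1)$, $\delta\in(0,H)$, $\rho>0$, and let $B^H$ be a fractional Brownian motion on $[0,1]$ with Hurst index $H$. For $n\ge1$ let $\mathcal{E}_n$ be the event that there exist $m\ge1$ and $1\le k\le 2^{n+m-1}$ with $|\mu_n(m,k)|>\tfrac{\rho}{2}2^{-(n+m)(H-\delta)}$, and let $\mathcal{N}_{\mathcal{E}}=\sup\{n\ge1:\mathcal{E}_n\text{ happens}\}$. Then $\mathbb{P}(\limsup_{n\to\infty}\mathcal{E}_n)=0$, and $\mathcal{N}_{\mathcal{E}}$ has a finite moment generating function.
   Context: A fractional Brownian motion with Hurst index $H$ is a centered Gaussian process with $B^H(0)=0$ and covariance $\mathbb{E}[B^H(s)B^H(t)]=\tfrac12(|s|^{2H}+|t|^{2H}-|s-t|^{2H})$. $t^n_i=i/2^n$, $\mathbf{B}^H_n=(B^H(t^n_0),\dots,B^H(t^n_{2^n}))$, $\boldsymbol\alpha_n(m,k)=(B^H(t^{n+m}_{2k-2}),B^H(t^{n+m}_{2k-1}),B^H(t^{n+m}_{2k}))^\top$, $\boldsymbol\beta=(1/2,-1,1/2)^\top$, and $\mu_n(m,k)=\boldsymbol\beta^\top\mathbb{E}[\boldsymbol\alpha_n(m,k)\mid\mathbf{B}^H_n]$. *)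

theory Defs
  imports "HOL-Probability.Probability"
begin

definition fbm_cov :: "real \<Rightarrow> real \<Rightarrow> real \<Rightarrow> real" where
  "fbm_cov H s t = (\<bar>s\<bar> powr (2*H) + \<bar>t\<bar> powr (2*H) - \<bar>s - t\<bar> powr (2*H)) / 2"

definition centered_normal :: "real \<Rightarrow> real measure" where
  "centered_normal v = (if v = 0 then return borel 0
                        else density lborel (normal_density 0 (sqrt v)))"

definition is_fBM :: "'a measure \<Rightarrow> real \<Rightarrow> (real \<Rightarrow> 'a \<Rightarrow> real) \<Rightarrow> bool" where
  "is_fBM M H B \<longleftrightarrow> prob_space M
     \<and> (\<forall>t\<in>{0..1}. B t \<in> borel_measurable M)
     \<and> (\<forall>\<omega>\<in>space M. B 0 \<omega> = 0)
     \<and> (\<forall>s\<in>{0..1}. \<forall>t\<in>{0..1}. integrable M (\<lambda>\<omega>. B s \<omega> * B t \<omega>)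
            \<and> (\<integral>\<omega>. B s \<omega> * B t \<omega> \<partial>M) = fbm_cov H s t)
     \<and> (\<forall>ts cs. set ts \<subseteq> {0..1} \<and> length cs = length ts \<longrightarrow>
          distr M borel (\<lambda>\<omega>. \<Sum>i<length ts. cs!i * B (ts!i) \<omega>)
          = centered_normal (\<Sum>i<length ts. \<Sum>j<length ts. cs!i * cs!j * fbm_cov H (ts!i) (ts!j)))"

definition dyad :: "nat \<Rightarrow> nat \<Rightarrow> real" where
  "dyad n i = real i / 2 ^ n"

definition gen_sigma :: "'a measure \<Rightarrow> (real \<Rightarrow> 'a \<Rightarrow> real) \<Rightarrow> nat \<Rightarrow> 'a measure" where
  "gen_sigma M B n = sigma (space M)
     (\<Union>i\<in>{0..2^n}. {B (dyad n i) -` A \<inter> space M | A. A \<in> sets borel})"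

text \<open>mu_n(m,k) = beta^T E[alpha_n(m,k) | B_n], with the conditional expectation of the
  vector taken componentwise.\<close>
definition mu :: "'a measure \<Rightarrow> (real \<Rightarrow> 'a \<Rightarrow> real) \<Rightarrow> nat \<Rightarrow> nat \<Rightarrow> nat \<Rightarrow> 'a \<Rightarrow> real" where
  "mu M B n m k \<omega> =
      (1/2) * real_cond_exp M (gen_sigma M B n) (B (dyad (n+m) (2*k-2))) \<omega>
    - real_cond_exp M (gen_sigma M B n) (B (dyad (n+m) (2*k-1))) \<omega>
    + (1/2) * real_cond_exp M (gen_sigma M B n) (B (dyad (n+m) (2*k))) \<omega>"

definition evE :: "'a measure \<Rightarrow> (real \<Rightarrow> 'a \<Rightarrow> real) \<Rightarrow> real \<Rightarrow> real \<Rightarrow> real \<Rightarrow> nat \<Rightarrow> 'a set" where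
  "evE M B H \<delta> \<rho> n = {\<omega>\<in>space M. \<exists>m\<ge>1. \<exists>k\<in>{1..2^(n+m-1)}.
      \<bar>mu M B n m k \<omega>\<bar> > \<rho>/2 * 2 powr (- real (n+m) * (H - \<delta>))}"

end

(* \<mu>_n(m,k) is the conditional expectation, given the coarse grid values, of the second
   difference \<beta>^T \<alpha>_n(m,k), a centred Gaussian of variance at most 2^(-2H(n+m)).  By
   conditional Jensen its 2p-th moment is bounded by the Gaussian one, so Markov's inequality and
   a union bound over k and m give P(E_n) \<le> C_p r_p^n with r_p = 2^(1-2\<delta>p).  As p is arbitrary,
   P(E_n) decays faster than every exponential.  Borel-Cantelli gives the first two claims, and
   E[exp(\<theta> N)] \<le> 1 + \<Sum>_n exp(|\<theta>| n) P(E_n) < \<infinity> the third. *)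

theory Submission
  imports Defs
begin

section \<open>Gaussian moments, conditional Jensen and Markov\<close>

definition std_normal_moment :: "nat \<Rightarrow> real" where
  "std_normal_moment p = fact (2*p) / (2^p * fact p)"

lemma std_normal_moment_nonneg: "0 \<le> std_normal_moment p"
  by (simp add: std_normal_moment_def)

lemma
  assumes Y: "Y \<in> borel_measurable M" and law: "distr M borel Y = centered_normal v" and v: "0 < v"
  shows integrable_centered_normal_power: "integrable M (\<lambda>\<omega>. Y \<omega> ^ q)"
    and integral_centered_normal_even_power: "(\<integral>\<omega>. Y \<omega> ^ (2*p) \<partial>M) = std_normal_moment p * v ^ p"
proof -
  have law': "distr M borel Y = density lborel (normal_density 0 (sqrt v))"
    using law v by (simp add: centered_normal_def)
  have "integrable lborel (\<lambda>x. normal_density 0 (sqrt v) x * x ^ q)"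
    using integrable_normal_moment[of "sqrt v" 0 q] v by simp
  then have "integrable (density lborel (normal_density 0 (sqrt v))) (\<lambda>x. x ^ q)"
    by (subst integrable_density) auto
  then show "integrable M (\<lambda>\<omega>. Y \<omega> ^ q)"
    using Y by (simp flip: law' add: integrable_distr_eq)
  have "(\<integral>\<omega>. Y \<omega> ^ (2*p) \<partial>M) = (\<integral>x. x ^ (2*p) \<partial>density lborel (normal_density 0 (sqrt v)))"
    using Y law' by (subst integral_distr[symmetric]) auto
  also have "\<dots> = (\<integral>x. normal_density 0 (sqrt v) x * (x - 0) ^ (2*p) \<partial>lborel)"
    by (subst integral_density) auto
  also have "\<dots> = fact (2*p) / ((2 / (sqrt v)\<^sup>2) ^ p * fact p)"
    using v by (intro integral_normal_moment_even) simp
  also have "\<dots> = std_normal_moment p * v ^ p"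
    using v by (simp add: std_normal_moment_def field_simps power_divide)
  finally show "(\<integral>\<omega>. Y \<omega> ^ (2*p) \<partial>M) = std_normal_moment p * v ^ p" .
qed

lemma (in sigma_finite_subalgebra) nn_integral_cond_exp_even_power_le:
  assumes "integrable M Y" "integrable M (\<lambda>\<omega>. Y \<omega> ^ (2*p))"
  shows "(\<integral>\<^sup>+\<omega>. ennreal (real_cond_exp M F Y \<omega> ^ (2*p)) \<partial>M) \<le> ennreal (\<integral>\<omega>. Y \<omega> ^ (2*p) \<partial>M)"
proof -
  have jensen: "AE \<omega> in M. real_cond_exp M F Y \<omega> ^ (2*p) \<le> real_cond_exp M F (\<lambda>\<omega>. Y \<omega> ^ (2*p)) \<omega>"
    using assms by (intro real_cond_exp_jensens_inequality(2)[where I=UNIV]) (auto intro: convex_power_even)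
  have "(\<integral>\<^sup>+\<omega>. ennreal (real_cond_exp M F Y \<omega> ^ (2*p)) \<partial>M)
      \<le> (\<integral>\<^sup>+\<omega>. ennreal (real_cond_exp M F (\<lambda>\<omega>. Y \<omega> ^ (2*p)) \<omega>) \<partial>M)"
    using jensen by (intro nn_integral_mono_AE) (auto elim!: eventually_mono intro: ennreal_leI)
  also have "\<dots> = ennreal (\<integral>\<omega>. real_cond_exp M F (\<lambda>\<omega>. Y \<omega> ^ (2*p)) \<omega> \<partial>M)"
    using jensen assms(2)
    by (intro nn_integral_eq_integral) (auto elim!: eventually_mono intro: order.trans[rotated] simp: zero_le_even_power)
  also have "\<dots> = ennreal (\<integral>\<omega>. Y \<omega> ^ (2*p) \<partial>M)"
    using assms(2) by (simp add: real_cond_exp_int(2))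
  finally show ?thesis .
qed

lemma emeasure_abs_greater_le_even_moment:
  fixes X :: "'a \<Rightarrow> real"
  assumes [measurable]: "X \<in> borel_measurable M" and t: "0 < t"
  shows "emeasure M {\<omega>\<in>space M. t < \<bar>X \<omega>\<bar>}
           \<le> ennreal (1 / t ^ (2*p)) * (\<integral>\<^sup>+\<omega>. ennreal (X \<omega> ^ (2*p)) \<partial>M)"
proof -
  have "{\<omega>\<in>space M. t < \<bar>X \<omega>\<bar>} \<subseteq> {\<omega>\<in>space M. 1 \<le> ennreal (1 / t ^ (2*p)) * ennreal (X \<omega> ^ (2*p))}"
  proof safe
    fix \<omega> assume "t < \<bar>X \<omega>\<bar>"
    then have "t ^ (2*p) \<le> \<bar>X \<omega>\<bar> ^ (2*p)" using t by (intro power_mono) auto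
    then have "1 \<le> 1 / t ^ (2*p) * X \<omega> ^ (2*p)" using t by (simp add: power_even_abs field_simps)
    then show "1 \<le> ennreal (1 / t ^ (2*p)) * ennreal (X \<omega> ^ (2*p))"
      using t by (simp flip: ennreal_mult)
  qed
  then have "emeasure M {\<omega>\<in>space M. t < \<bar>X \<omega>\<bar>}
      \<le> emeasure M {\<omega>\<in>space M. 1 \<le> ennreal (1 / t ^ (2*p)) * ennreal (X \<omega> ^ (2*p))}"
    by (intro emeasure_mono) measurable
  also have "\<dots> \<le> ennreal (1 / t ^ (2*p)) * (\<integral>\<^sup>+\<omega>. ennreal (X \<omega> ^ (2*p)) * indicator (space M) \<omega> \<partial>M)"
    by (intro nn_integral_Markov_inequality) measurable
  also have "(\<integral>\<^sup>+\<omega>. ennreal (X \<omega> ^ (2*p)) * indicator (space M) \<omega> \<partial>M) = (\<integral>\<^sup>+\<omega>. ennreal (X \<omega> ^ (2*p)) \<partial>M)"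
    by (intro nn_integral_cong) auto
  finally show ?thesis .
qed

section \<open>Events with superexponentially small probabilities\<close>

lemma exp_last_occurrence_le:
  fixes E :: "nat \<Rightarrow> 'a set"
  assumes fin: "finite {n. 1 \<le> n \<and> \<omega> \<in> E n}"
  shows "ennreal (exp (\<theta> * real (Sup {n. 1 \<le> n \<and> \<omega> \<in> E n})))
           \<le> 1 + (\<Sum>n. ennreal (exp (\<bar>\<theta>\<bar> * real n)) * indicator (E n) \<omega>)"
proof (cases "{n. 1 \<le> n \<and> \<omega> \<in> E n} = {}")
  case True
  then show ?thesis by (simp only: Sup_nat_empty) simp
next
  case False
  define N where "N = Sup {n. 1 \<le> n \<and> \<omega> \<in> E n}"
  have "N \<in> {n. 1 \<le> n \<and> \<omega> \<in> E n}"
    unfolding N_def using fin False by (metis cSup_eq_Max Max_in)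
  then have "ennreal (exp (\<theta> * real N)) \<le> ennreal (exp (\<bar>\<theta>\<bar> * real N)) * indicator (E N) \<omega>"
    by (auto intro!: ennreal_leI mult_right_mono)
  also have "\<dots> \<le> (\<Sum>n. ennreal (exp (\<bar>\<theta>\<bar> * real n)) * indicator (E n) \<omega>)"
    using sum_le_suminf[of "\<lambda>n. ennreal (exp (\<bar>\<theta>\<bar> * real n)) * indicator (E n) \<omega>" "{N}"]
    by (simp only: summableI finite.emptyI finite.insertI zero_le simp_thms
        sum.insert sum.empty empty_iff add_0_right)
  finally show ?thesis unfolding N_def by (simp add: add_increasing)
qed

lemma (in prob_space) summable_exp_mult_prob:
  assumes decay: "\<And>\<theta>. \<exists>C. \<forall>n. prob (E n) \<le> C * exp (- \<theta> * real n)"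
  shows "summable (\<lambda>n. exp (\<theta> * real n) * prob (E n))"
proof -
  obtain C where C: "\<And>n. prob (E n) \<le> C * exp (- (\<theta> + 1) * real n)"
    using decay by blast
  have bound: "exp (\<theta> * real n) * prob (E n) \<le> C * exp (-1) ^ n" for n
  proof -
    have "exp (\<theta> * real n) * prob (E n) \<le> exp (\<theta> * real n) * (C * exp (- (\<theta> + 1) * real n))"
      using C by (rule mult_left_mono) simp
    also have "\<dots> = C * exp (real n * -1)"
      unfolding mult.left_commute[of _ C] exp_add[symmetric] by (simp add: algebra_simps)
    finally show ?thesis by (simp only: exp_of_nat_mult)
  qed
  have "summable (\<lambda>n. C * exp (-1) ^ n)"
    by (intro summable_mult summable_geometric) simp
  then show ?thesis
    by (rule summable_comparison_test') (use bound in simp)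
qed

lemma (in prob_space) superexponential_events_last_occurrence:
  assumes [measurable]: "\<And>n. E n \<in> events"
    and decay: "\<And>\<theta>. \<exists>C. \<forall>n. prob (E n) \<le> C * exp (- \<theta> * real n)"
  shows "prob (\<Inter>j. \<Union>n\<in>{j..}. E n) = 0"
    and "AE \<omega> in M. finite {n. 1 \<le> n \<and> \<omega> \<in> E n}"
    and "(\<integral>\<^sup>+\<omega>. ennreal (exp (\<theta> * real (Sup {n. 1 \<le> n \<and> \<omega> \<in> E n}))) \<partial>M) < \<infinity>"
proof -
  note weighted_summable = summable_exp_mult_prob[OF decay]
  have summable: "summable (\<lambda>n. prob (E n))"
    using weighted_summable[of 0] by simp
  show "prob (\<Inter>j. \<Union>n\<in>{j..}. E n) = 0"
  proof -
    have "limsup E \<in> null_sets M"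
      by (rule borel_cantelli_limsup1) (simp_all add: summable less_top[symmetric])
    then show ?thesis by (simp add: limsup_INF_SUP measure_def null_setsD1)
  qed
  show fin: "AE \<omega> in M. finite {n. 1 \<le> n \<and> \<omega> \<in> E n}"
  proof -
    have "AE \<omega> in M. eventually (\<lambda>n. \<omega> \<in> space M - E n) sequentially"
      by (rule borel_cantelli_AE1) (simp_all add: summable less_top[symmetric])
    then show ?thesis
    proof eventually_elim
      case (elim \<omega>)
      then obtain N where "\<And>n. N \<le> n \<Longrightarrow> \<omega> \<notin> E n"
        by (auto simp: eventually_sequentially)
      then have "{n. 1 \<le> n \<and> \<omega> \<in> E n} \<subseteq> {..<N}"
        by (auto simp flip: not_le)
      then show ?case by (rule finite_subset) simp
    qed
  qed
  have "(\<integral>\<^sup>+\<omega>. ennreal (exp (\<theta> * real (Sup {n. 1 \<le> n \<and> \<omega> \<in> E n}))) \<partial>M)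
      \<le> (\<integral>\<^sup>+\<omega>. 1 + (\<Sum>n. ennreal (exp (\<bar>\<theta>\<bar> * real n)) * indicator (E n) \<omega>) \<partial>M)"
    using fin by (intro nn_integral_mono_AE) (elim eventually_mono, rule exp_last_occurrence_le)
  also have "\<dots> = 1 + (\<Sum>n. ennreal (exp (\<bar>\<theta>\<bar> * real n) * prob (E n)))"
    by (subst nn_integral_add)
       (auto simp: nn_integral_suminf nn_integral_cmult_indicator emeasure_eq_measure ennreal_mult prob_space)
  also have "\<dots> < \<infinity>"
    using weighted_summable[of "\<bar>\<theta>\<bar>"] by (simp add: suminf_ennreal2 less_top[symmetric])
  finally show "(\<integral>\<^sup>+\<omega>. ennreal (exp (\<theta> * real (Sup {n. 1 \<le> n \<and> \<omega> \<in> E n}))) \<partial>M) < \<infinity>" .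
qed

section \<open>Fractional Brownian motion\<close>

lemma
  assumes "is_fBM M H B"
  shows fbm_prob_space: "prob_space M"
    and fbm_measurable: "t \<in> {0..1} \<Longrightarrow> B t \<in> borel_measurable M"
    and fbm_integrable: "t \<in> {0..1} \<Longrightarrow> integrable M (B t)"
    and fbm_gaussian: "set ts \<subseteq> {0..1} \<Longrightarrow> length cs = length ts \<Longrightarrow>
          distr M borel (\<lambda>\<omega>. \<Sum>i<length ts. cs!i * B (ts!i) \<omega>)
          = centered_normal (\<Sum>i<length ts. \<Sum>j<length ts. cs!i * cs!j * fbm_cov H (ts!i) (ts!j))"
proof -
  note fbm = assms[unfolded is_fBM_def]
  show "prob_space M" using fbm by blast
  then interpret prob_space M .
  show meas: "B t \<in> borel_measurable M" if "t \<in> {0..1}" for t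
    using fbm that by blast
  show "integrable M (B t)" if "t \<in> {0..1}"
  proof (rule square_integrable_imp_integrable[OF meas[OF that]])
    show "integrable M (\<lambda>\<omega>. (B t \<omega>)\<^sup>2)"
      using fbm that unfolding power2_eq_square by blast
  qed
  show "set ts \<subseteq> {0..1} \<Longrightarrow> length cs = length ts \<Longrightarrow>
          distr M borel (\<lambda>\<omega>. \<Sum>i<length ts. cs!i * B (ts!i) \<omega>)
          = centered_normal (\<Sum>i<length ts. \<Sum>j<length ts. cs!i * cs!j * fbm_cov H (ts!i) (ts!j))"
    using fbm by blast
qed

lemma dyad_in_unit_interval:
  assumes "i \<le> 2^n"
  shows "dyad n i \<in> {0..1}"
proof -
  have "real i \<le> 2^n"
    using assms by (metis of_nat_le_iff of_nat_numeral of_nat_power)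
  then show ?thesis by (simp add: dyad_def)
qed

lemma gen_sigma_subalgebra:
  assumes "is_fBM M H B"
  shows "sigma_finite_subalgebra M (gen_sigma M B n)"
proof -
  interpret prob_space M using fbm_prob_space[OF assms] .
  let ?G = "\<Union>i\<in>{0..2^n}. {B (dyad n i) -` A \<inter> space M | A. A \<in> sets borel}"
  have "?G \<subseteq> sets M"
    using fbm_measurable[OF assms dyad_in_unit_interval] by (auto intro: measurable_sets)
  then have "sets (gen_sigma M B n) \<subseteq> sets M"
    unfolding gen_sigma_def by (subst sigma_le_sets) auto
  then have "subalgebra M (gen_sigma M B n)"
    by (simp add: subalgebra_def gen_sigma_def space_measure_of_conv)
  then show ?thesis
    by (intro finite_measure_subalgebra_is_sigma_finite finite_measure_subalgebra.intro
        finite_measure_subalgebra_axioms.intro) (simp_all add: finite_measure)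
qed

(* At x = t^(n+m)_(2k-2) with step h = 2^-(n+m) this is the paper's \<beta>^T \<alpha>_n(m,k). *)
definition second_difference :: "(real \<Rightarrow> 'a \<Rightarrow> real) \<Rightarrow> real \<Rightarrow> real \<Rightarrow> 'a \<Rightarrow> real" where
  "second_difference B x h \<omega> = 1/2 * B x \<omega> - B (x + h) \<omega> + 1/2 * B (x + 2*h) \<omega>"

lemma fbm_cov_second_difference:
  fixes x h H :: real
  assumes h: "0 < h"
  defines "ts \<equiv> [x, x+h, x+2*h]" and "cs \<equiv> [1/2, -1, 1/2]"
  shows "(\<Sum>i<length ts. \<Sum>l<length ts. cs!i * cs!l * fbm_cov H (ts!i) (ts!l))
         = h powr (2*H) * (1 - 4 powr H / 4)"
proof -
  have sym: "fbm_cov H s t = fbm_cov H t s" for s t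
    by (simp add: fbm_cov_def abs_minus_commute add.commute)
  have dist: "\<bar>x - (x + h)\<bar> = h" "\<bar>x + h - (x + 2*h)\<bar> = h" "\<bar>x - (x + 2*h)\<bar> = 2*h"
    using h by auto
  have "(\<Sum>i<length ts. \<Sum>l<length ts. cs!i * cs!l * fbm_cov H (ts!i) (ts!l))
      = fbm_cov H x x / 4 + fbm_cov H (x+h) (x+h) + fbm_cov H (x+2*h) (x+2*h) / 4
        - fbm_cov H x (x+h) - fbm_cov H (x+h) (x+2*h) + fbm_cov H x (x+2*h) / 2"
    by (simp add: ts_def cs_def lessThan_nat_numeral sym[of "x+h" x] sym[of "x+2*h" x] sym[of "x+2*h" "x+h"])
  also have "\<dots> = h powr (2*H) - (2*h) powr (2*H) / 4"
    unfolding fbm_cov_def dist by (simp add: field_simps)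
  also have "(2*h) powr (2*H) = 4 powr H * h powr (2*H)"
    using h by (simp add: powr_mult flip: powr_powr[of 2 2 H])
  finally show ?thesis by (simp add: right_diff_distrib)
qed

lemma
  assumes fbm: "is_fBM M H B" and H: "H < 1" and h: "0 < h" and x: "0 \<le> x" "x + 2*h \<le> 1"
  shows integrable_second_difference_power: "integrable M (\<lambda>\<omega>. second_difference B x h \<omega> ^ q)"
    and integral_second_difference_even_power_le:
      "(\<integral>\<omega>. second_difference B x h \<omega> ^ (2*p) \<partial>M) \<le> std_normal_moment p * h powr (2*H*p)"
proof -
  define ts where "ts = [x, x+h, x+2*h]"
  define cs :: "real list" where "cs = [1/2, -1, 1/2]"
  define v where "v = h powr (2*H) * (1 - 4 powr H / 4)"
  have ts: "set ts \<subseteq> {0..1}"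
    using x h by (auto simp: ts_def)
  have "4 powr H < 4 powr 1"
    using H by (intro powr_less_mono) auto
  then have v: "0 < v" "v \<le> h powr (2*H)"
    using h by (auto simp: v_def)
  have sd: "second_difference B x h = (\<lambda>\<omega>. \<Sum>i<length ts. cs!i * B (ts!i) \<omega>)"
    by (simp add: fun_eq_iff second_difference_def ts_def cs_def lessThan_nat_numeral)
  have [measurable]: "B x \<in> borel_measurable M" "B (x+h) \<in> borel_measurable M"
    "B (x+2*h) \<in> borel_measurable M"
    using x h by (auto intro: fbm_measurable[OF fbm])
  have meas: "second_difference B x h \<in> borel_measurable M"
    unfolding second_difference_def[abs_def] by measurable
  have "length cs = length ts"
    by (simp add: cs_def ts_def)
  note law = fbm_gaussian[OF fbm ts this,
      unfolded fbm_cov_second_difference[OF h, where x=x and H=H, folded ts_def cs_def] v_def[symmetric],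
      folded sd]
  show "integrable M (\<lambda>\<omega>. second_difference B x h \<omega> ^ q)"
    by (rule integrable_centered_normal_power[OF meas law v(1)])
  have "(\<integral>\<omega>. second_difference B x h \<omega> ^ (2*p) \<partial>M) = std_normal_moment p * v ^ p"
    by (rule integral_centered_normal_even_power[OF meas law v(1)])
  also have "\<dots> \<le> std_normal_moment p * (h powr (2*H)) ^ p"
    using v by (intro mult_left_mono power_mono std_normal_moment_nonneg) auto
  also have "(h powr (2*H)) ^ p = h powr (2*H*p)"
    using h by (simp add: powr_power mult.commute)
  finally show "(\<integral>\<omega>. second_difference B x h \<omega> ^ (2*p) \<partial>M) \<le> std_normal_moment p * h powr (2*H*p)" .
qed

lemma dyad_step:
  assumes "1 \<le> k"
  shows "dyad j (2*k-2) + 1/2^j = dyad j (2*k-1)"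
    and "dyad j (2*k-2) + 2 * (1/2^j) = dyad j (2*k)"
  using assms by (simp_all add: dyad_def of_nat_diff field_simps)

lemma mu_measurable:
  assumes "is_fBM M H B"
  shows "mu M B n m k \<in> borel_measurable M"
proof -
  interpret sigma_finite_subalgebra M "gen_sigma M B n"
    by (rule gen_sigma_subalgebra[OF assms])
  show ?thesis
    unfolding mu_def[abs_def] by measurable
qed

lemma mu_AE_eq_cond_exp_second_difference:
  assumes fbm: "is_fBM M H B" and k: "1 \<le> k" "2*k \<le> 2^(n+m)"
  shows "AE \<omega> in M. mu M B n m k \<omega>
           = real_cond_exp M (gen_sigma M B n) (second_difference B (dyad (n+m) (2*k-2)) (1/2^(n+m))) \<omega>"
proof -
  interpret sigma_finite_subalgebra M "gen_sigma M B n"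
    by (rule gen_sigma_subalgebra[OF fbm])
  define a b c where "a = dyad (n+m) (2*k-2)" and "b = dyad (n+m) (2*k-1)" and "c = dyad (n+m) (2*k)"
  have sd: "second_difference B a (1/2^(n+m)) = (\<lambda>\<omega>. (1/2 * B a \<omega> - B b \<omega>) + 1/2 * B c \<omega>)"
    using dyad_step[OF k(1), of "n+m"] by (simp add: fun_eq_iff second_difference_def a_def b_def c_def)
  have int: "integrable M (B a)" "integrable M (B b)" "integrable M (B c)"
    using k unfolding a_def b_def c_def by (auto intro!: fbm_integrable[OF fbm] dyad_in_unit_interval)
  have half: "integrable M (\<lambda>\<omega>. 1/2 * B a \<omega>)" "integrable M (\<lambda>\<omega>. 1/2 * B c \<omega>)"
    using int by auto
  show ?thesis
    unfolding sd a_def[symmetric]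
    using real_cond_exp_add[OF Bochner_Integration.integrable_diff[OF half(1) int(2)] half(2)]
      real_cond_exp_diff[OF half(1) int(2)]
      real_cond_exp_cmult[OF int(1), of "1/2"] real_cond_exp_cmult[OF int(3), of "1/2"]
    by eventually_elim (simp add: mu_def a_def b_def c_def)
qed

lemma nn_integral_mu_even_power_le:
  assumes fbm: "is_fBM M H B" and H: "H < 1" and k: "1 \<le> k" "2*k \<le> 2^(n+m)"
  shows "(\<integral>\<^sup>+\<omega>. ennreal (mu M B n m k \<omega> ^ (2*p)) \<partial>M)
           \<le> ennreal (std_normal_moment p * 2 powr (- (2*H*p*(n+m))))"
proof -
  interpret sigma_finite_subalgebra M "gen_sigma M B n"
    by (rule gen_sigma_subalgebra[OF fbm])
  define x h where "x = dyad (n+m) (2*k-2)" and "h = (1 / 2^(n+m) :: real)"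
  have h: "0 < h" by (simp add: h_def)
  have x: "0 \<le> x" "x + 2*h \<le> 1"
    using dyad_in_unit_interval[OF k(2)] dyad_step(2)[OF k(1), of "n+m"]
    by (auto simp: x_def h_def dyad_def)
  note integrable = integrable_second_difference_power[OF fbm H h x]
  have "(\<integral>\<^sup>+\<omega>. ennreal (mu M B n m k \<omega> ^ (2*p)) \<partial>M)
      = (\<integral>\<^sup>+\<omega>. ennreal (real_cond_exp M (gen_sigma M B n) (second_difference B x h) \<omega> ^ (2*p)) \<partial>M)"
    using mu_AE_eq_cond_exp_second_difference[OF fbm k]
    by (intro nn_integral_cong_AE) (auto simp: x_def h_def)
  also have "\<dots> \<le> ennreal (\<integral>\<omega>. second_difference B x h \<omega> ^ (2*p) \<partial>M)"
    using integrable[of 1] integrable[of "2*p"] by (intro nn_integral_cond_exp_even_power_le) auto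
  also have "\<dots> \<le> ennreal (std_normal_moment p * h powr (2*H*p))"
    by (intro ennreal_leI integral_second_difference_even_power_le[OF fbm H h x])
  also have "h powr (2*H*p) = 2 powr (- (2*H*p*(n+m)))"
    by (simp add: h_def powr_minus_divide powr_realpow[symmetric] powr_divide powr_powr mult.commute)
  finally show ?thesis .
qed

section \<open>The events \<open>E\<^sub>n\<close>\<close>

lemma emeasure_mu_exceeds_le:
  assumes fbm: "is_fBM M H B" and H: "H < 1" and \<rho>: "0 < \<rho>" and k: "1 \<le> k" "2*k \<le> 2^(n+m)"
  shows "emeasure M {\<omega>\<in>space M. \<rho>/2 * 2 powr (- real (n+m) * (H - \<delta>)) < \<bar>mu M B n m k \<omega>\<bar>}
           \<le> ennreal (std_normal_moment p * (2/\<rho>)^(2*p) * 2 powr (- (2*\<delta>*p*(n+m))))"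
proof -
  define t where "t = \<rho>/2 * 2 powr (- real (n+m) * (H - \<delta>))"
  have t: "0 < t" using \<rho> by (simp add: t_def)
  have "emeasure M {\<omega>\<in>space M. t < \<bar>mu M B n m k \<omega>\<bar>}
      \<le> ennreal (1 / t^(2*p)) * (\<integral>\<^sup>+\<omega>. ennreal (mu M B n m k \<omega> ^ (2*p)) \<partial>M)"
    by (rule emeasure_abs_greater_le_even_moment[OF mu_measurable[OF fbm] t])
  also have "\<dots> \<le> ennreal (1 / t^(2*p)) * ennreal (std_normal_moment p * 2 powr (- (2*H*p*(n+m))))"
    by (intro mult_left_mono nn_integral_mu_even_power_le[OF fbm H k]) simp
  also have "\<dots> = ennreal (std_normal_moment p * (2/\<rho>)^(2*p) * 2 powr (- (2*\<delta>*p*(n+m))))"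
  proof -
    have "t^(2*p) = (\<rho>/2)^(2*p) * (2 powr (- real (n+m) * (H - \<delta>))) ^ (2*p)"
      unfolding t_def by (rule power_mult_distrib)
    also have "(2 powr (- real (n+m) * (H - \<delta>))) ^ (2*p) = 2 powr (- (2*p*(n+m)*(H - \<delta>)))"
      by (subst powr_power) (simp_all add: algebra_simps)
    finally have tp: "t^(2*p) = (\<rho>/2)^(2*p) * 2 powr (- (2*p*(n+m)*(H - \<delta>)))" .
    have "- (2*H*p*(n+m)) - - (2*p*(n+m)*(H - \<delta>)) = - (2*\<delta>*p*(n+m))"
      by (simp add: algebra_simps)
    then have powr_eq: "2 powr (- (2*\<delta>*p*(n+m)))
        = 2 powr (- (2*H*p*(n+m))) / 2 powr (- (2*p*(n+m)*(H - \<delta>)))"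
      by (simp only: powr_diff[symmetric])
    have "1 / t^(2*p) * 2 powr (- (2*H*p*(n+m))) = (2/\<rho>)^(2*p) * 2 powr (- (2*\<delta>*p*(n+m)))"
      unfolding tp powr_eq using \<rho> by (simp add: power_divide field_simps)
    then show ?thesis
      using t std_normal_moment_nonneg[of p] by (simp add: ennreal_mult[symmetric] mult_ac)
  qed
  finally show ?thesis unfolding t_def .
qed

lemma evE_eq_Union:
  "evE M B H \<delta> \<rho> n = (\<Union>m. \<Union>k\<in>{1..2^(n+m)}.
     {\<omega>\<in>space M. \<rho>/2 * 2 powr (- real (n + Suc m) * (H - \<delta>)) < \<bar>mu M B n (Suc m) k \<omega>\<bar>})"
    (is "_ = (\<Union>m. \<Union>k\<in>{1..2^(n+m)}. ?A (Suc m) k)")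
proof (intro set_eqI iffI)
  fix \<omega> assume "\<omega> \<in> evE M B H \<delta> \<rho> n"
  then obtain m k where "1 \<le> m" "k \<in> {1..2^(n+m-1)}" "\<omega> \<in> ?A m k"
    unfolding evE_def by blast
  moreover from \<open>1 \<le> m\<close> obtain m' where "m = Suc m'"
    by (cases m) auto
  ultimately show "\<omega> \<in> (\<Union>m. \<Union>k\<in>{1..2^(n+m)}. ?A (Suc m) k)"
    by (intro UN_I[of m'] UN_I[of k]) auto
next
  fix \<omega> assume "\<omega> \<in> (\<Union>m. \<Union>k\<in>{1..2^(n+m)}. ?A (Suc m) k)"
  then obtain m k where k: "k \<in> {1..2^(n + Suc m - 1)}" and "\<omega> \<in> ?A (Suc m) k"
    by auto
  then have "\<omega> \<in> space M" "\<rho>/2 * 2 powr (- real (n + Suc m) * (H - \<delta>)) < \<bar>mu M B n (Suc m) k \<omega>\<bar>"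
    by (simp_all only: mem_Collect_eq)
  with k show "\<omega> \<in> evE M B H \<delta> \<rho> n"
    unfolding evE_def by (intro CollectI conjI exI[of _ "Suc m"] bexI[of _ k]) simp_all
qed

lemma evE_sets:
  assumes "is_fBM M H B"
  shows "evE M B H \<delta> \<rho> n \<in> sets M"
proof -
  have [measurable]: "mu M B n m k \<in> borel_measurable M" for m k
    by (rule mu_measurable[OF assms])
  show ?thesis
    unfolding evE_eq_Union by measurable
qed

lemma emeasure_evE_le:
  assumes fbm: "is_fBM M H B" and H: "H < 1" and \<delta>: "0 < \<delta>" and \<rho>: "0 < \<rho>"
    and r: "r = 2 powr (1 - 2*\<delta>*p)" "r < 1"
  shows "emeasure M (evE M B H \<delta> \<rho> n) \<le> ennreal (std_normal_moment p * (2/\<rho>)^(2*p) / (1 - r) * r^n)"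
proof -
  define K where "K = std_normal_moment p * (2/\<rho>)^(2*p)"
  define A where "A m k = {\<omega>\<in>space M. \<rho>/2 * 2 powr (- real (n + Suc m) * (H - \<delta>)) < \<bar>mu M B n (Suc m) k \<omega>\<bar>}"
    for m k
  have K: "0 \<le> K" by (simp add: K_def std_normal_moment_nonneg)
  have r0: "0 < r" using r by simp
  have [measurable]: "A m k \<in> sets M" for m k
    using mu_measurable[OF fbm] unfolding A_def by measurable
  have block_bound: "(\<Sum>k\<in>{1..2^(n+m)}. emeasure M (A m k)) \<le> ennreal (K * r^(n+m))" for m
  proof -
    have "(\<Sum>k\<in>{1..2^(n+m)}. emeasure M (A m k))
        \<le> (\<Sum>k\<in>{1..2^(n+m)::nat}. ennreal (K * 2 powr (- (2*\<delta>*p*(n + Suc m)))))"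
      unfolding A_def K_def
      by (intro sum_mono emeasure_mu_exceeds_le[OF fbm H \<rho>]) (auto simp: power_add)
    also have "\<dots> = ennreal (K * (2^(n+m) * 2 powr (- (2*\<delta>*p*(n + Suc m)))))"
      using K by (simp add: ennreal_mult ennreal_of_nat_eq_real_of_nat mult_ac)
    also have "\<dots> \<le> ennreal (K * (2^(n+m) * 2 powr (- (2*\<delta>*p*(n+m)))))"
      using K \<delta> by (intro ennreal_leI mult_left_mono) (auto simp: algebra_simps)
    also have "2^(n+m) * 2 powr (- (2*\<delta>*p*(n+m))) = r^(n+m)"
      unfolding r(1) by (simp add: powr_powr powr_add [symmetric] powr_realpow[symmetric] algebra_simps)
    finally show ?thesis .
  qed
  have "emeasure M (evE M B H \<delta> \<rho> n) \<le> (\<Sum>m. emeasure M (\<Union>k\<in>{1..2^(n+m)}. A m k))"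
    unfolding evE_eq_Union A_def[symmetric] by (intro emeasure_subadditive_countably) auto
  also have "\<dots> \<le> (\<Sum>m. ennreal (K * r^(n+m)))"
    by (intro suminf_le order_trans[OF emeasure_subadditive_finite block_bound]) auto
  also have "\<dots> = ennreal (K / (1 - r) * r^n)"
  proof -
    have "(\<lambda>m. K * r^n * r^m) sums (K * r^n * (1 / (1 - r)))"
      using r r0 by (intro sums_mult geometric_sums) simp
    then show ?thesis
      using K r0 by (subst suminf_ennreal2) (auto simp: power_add sums_iff mult_ac)
  qed
  finally show ?thesis unfolding K_def .
qed

lemma two_powr_le_exp_ex:
  fixes \<delta> \<theta> :: real
  assumes "0 < \<delta>"
  shows "\<exists>p::nat. 2 powr (1 - 2*\<delta>*p) \<le> exp (- \<theta>)"
proof -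
  obtain p :: nat where "(\<theta> + ln 2) / (2 * \<delta> * ln 2) < p"
    using reals_Archimedean2 by blast
  then have "\<theta> + ln 2 < p * (2 * \<delta> * ln 2)"
    using assms by (simp add: divide_less_eq)
  then have "2 powr (1 - 2*\<delta>*p) \<le> exp (- \<theta>)"
    by (simp add: powr_def algebra_simps)
  then show ?thesis ..
qed

lemma prob_evE_superexponential:
  assumes fbm: "is_fBM M H B" and H: "H < 1" and \<delta>: "0 < \<delta>" and \<rho>: "0 < \<rho>"
  shows "\<exists>C. \<forall>n. measure M (evE M B H \<delta> \<rho> n) \<le> C * exp (- \<theta> * real n)"
proof -
  interpret prob_space M using fbm_prob_space[OF fbm] .
  define \<theta>' where "\<theta>' = max \<theta> 1"
  obtain p :: nat where r_le: "2 powr (1 - 2*\<delta>*p) \<le> exp (- \<theta>')"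
    using two_powr_le_exp_ex[OF \<delta>] by blast
  define r where "r = (2::real) powr (1 - 2*\<delta>*p)"
  have "exp (- \<theta>') < 1"
    by (simp add: \<theta>'_def)
  with r_le have r: "r < 1"
    unfolding r_def by linarith
  have r_pow: "r^n \<le> exp (- \<theta> * real n)" for n
  proof -
    have "r^n \<le> exp (- \<theta>') ^ n"
      using r_le by (intro power_mono) (simp_all add: r_def)
    also have "\<dots> = exp (- \<theta>' * real n)"
      by (simp add: exp_of_nat_mult[symmetric] mult.commute)
    also have "\<dots> \<le> exp (- \<theta> * real n)"
      by (simp add: \<theta>'_def mult_right_mono)
    finally show ?thesis .
  qed
  define C where "C = std_normal_moment p * (2/\<rho>)^(2*p) / (1 - r)"
  have C: "0 \<le> C"
    using r by (simp add: C_def std_normal_moment_nonneg)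
  have "measure M (evE M B H \<delta> \<rho> n) \<le> C * exp (- \<theta> * real n)" for n
  proof -
    have "ennreal (measure M (evE M B H \<delta> \<rho> n)) \<le> ennreal (C * r^n)"
      using emeasure_evE_le[OF fbm H \<delta> \<rho> r_def r, of n] by (simp add: emeasure_eq_measure C_def)
    moreover have "0 \<le> C * r^n"
      using C by (simp add: r_def)
    ultimately have "measure M (evE M B H \<delta> \<rho> n) \<le> C * r^n"
      by simp
    also have "\<dots> \<le> C * exp (- \<theta> * real n)"
      using C r_pow by (rule mult_left_mono[rotated])
    finally show ?thesis .
  qed
  then show ?thesis by blast
qed

theorem lemma6:
  fixes M :: "'a measure" and B :: "real \<Rightarrow> 'a \<Rightarrow> real" and H \<delta> \<rho> :: real
  assumes "0 < H" "H < 1" "0 < \<delta>" "\<delta> < H" "0 < \<rho>"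
    and "is_fBM M H B"
  defines "E \<equiv> evE M B H \<delta> \<rho>"
  defines "NE \<equiv> (\<lambda>\<omega>. Sup {n::nat. n \<ge> 1 \<and> \<omega> \<in> E n})"
  shows "measure M (\<Inter>j. \<Union>n\<in>{j..}. E n) = 0
       \<and> (AE \<omega> in M. finite {n::nat. n \<ge> 1 \<and> \<omega> \<in> E n})
       \<and> (\<forall>\<theta>::real. (\<integral>\<^sup>+\<omega>. ennreal (exp (\<theta> * real (NE \<omega>))) \<partial>M) < \<infinity>)"
proof -
  interpret prob_space M using fbm_prob_space[OF assms(6)] .
  have "E n \<in> events" for n
    unfolding E_def by (rule evE_sets[OF assms(6)])
  moreover have "\<exists>C. \<forall>n. prob (E n) \<le> C * exp (- \<theta> * real n)" for \<theta>
    unfolding E_def by (rule prob_evE_superexponential[OF assms(6,2,3,5)])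
  ultimately show ?thesis
    using superexponential_events_last_occurrence[of E] unfolding NE_def by blast
qed

end
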